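(* For any election $(V,C,\sigma)$ and candidate $a\in C$, if the integral domination graph $G(a)$ admits a perfect matching, then $\mathrm{plu}(a)\ge\mathrm{veto}(a)$.
   Context: An election: finite nonempty voter set $V$, finite candidate set $C$, a profile of linear orders $\sigma_i$ over $C$; $a\succeq_i c$ means $a=c$ or $i$ ranks $a$ above $c$; $\mathrm{top}(i)$ is $i$'s first choice. $\mathrm{plu}(a)$ is the number of voters ranking $a$ first and $\mathrm{veto}(a)$ the number of voters ranking $a$ last. The integral domination graph $G(a)$ is the bipartite graph with both sides copies of $V$ and edge $(i,j)$ iff $a\succeq_i\mathrm{top}(j)$. *)

theory Defs
  imports Main
begin

text \<open>An election: finite nonempty voter set V, finite candidate set C, and a profile
  assigning to each voter a linear order over C, represented as a list of all candidates
  without repetition (first element = most preferred).\<close>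

definition election :: "'v set \<Rightarrow> 'c set \<Rightarrow> ('v \<Rightarrow> 'c list) \<Rightarrow> bool" where
  "election V C \<sigma> \<longleftrightarrow> finite V \<and> V \<noteq> {} \<and> finite C \<and>
     (\<forall>i\<in>V. distinct (\<sigma> i) \<and> set (\<sigma> i) = C)"

definition weakly_prefers :: "('v \<Rightarrow> 'c list) \<Rightarrow> 'v \<Rightarrow> 'c \<Rightarrow> 'c \<Rightarrow> bool" where
  "weakly_prefers \<sigma> i a c \<longleftrightarrow> a = c \<or>
     (\<exists>p q. p < q \<and> q < length (\<sigma> i) \<and> \<sigma> i ! p = a \<and> \<sigma> i ! q = c)"

definition top :: "('v \<Rightarrow> 'c list) \<Rightarrow> 'v \<Rightarrow> 'c" where
  "top \<sigma> i = hd (\<sigma> i)"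

definition plu :: "'v set \<Rightarrow> ('v \<Rightarrow> 'c list) \<Rightarrow> 'c \<Rightarrow> nat" where
  "plu V \<sigma> a = card {i\<in>V. top \<sigma> i = a}"

definition veto :: "'v set \<Rightarrow> ('v \<Rightarrow> 'c list) \<Rightarrow> 'c \<Rightarrow> nat" where
  "veto V \<sigma> a = card {i\<in>V. last (\<sigma> i) = a}"

text \<open>Integral domination graph G(a): bipartite, both sides copies of V; edge (i,j)
  (i on the left, j on the right) iff a \<succeq>_i top(j).\<close>
definition dom_graph :: "'v set \<Rightarrow> ('v \<Rightarrow> 'c list) \<Rightarrow> 'c \<Rightarrow> ('v \<times> 'v) set" where
  "dom_graph V \<sigma> a = {(i, j). i \<in> V \<and> j \<in> V \<and> weakly_prefers \<sigma> i a (top \<sigma> j)}"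

definition has_perfect_matching :: "'v set \<Rightarrow> ('v \<times> 'v) set \<Rightarrow> bool" where
  "has_perfect_matching V E \<longleftrightarrow> (\<exists>\<pi>. bij_betw \<pi> V V \<and> (\<forall>i\<in>V. (i, \<pi> i) \<in> E))"

end

theory Submission
  imports Defs
begin

text \<open>A voter who ranks \<open>a\<close> last is adjacent in \<open>G(a)\<close> only to voters whose first choice
  is \<open>a\<close>. A perfect matching therefore injects the voters vetoing \<open>a\<close> into the voters
  ranking \<open>a\<close> first.\<close>

lemma distinct_nth_before_neq_last:
  assumes "distinct xs" "p < q" "q < length xs"
  shows "xs ! p \<noteq> last xs"
proof
  have "xs \<noteq> []"
    using assms(3) by auto
  assume "xs ! p = last xs"
  also from \<open>xs \<noteq> []\<close> have "last xs = xs ! (length xs - 1)"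
    by (rule last_conv_nth)
  finally have "p = length xs - 1"
    using assms by (simp add: nth_eq_iff_index_eq)
  with assms(2,3) show False by simp
qed

lemma weakly_prefers_last_imp_eq:
  assumes "distinct (\<sigma> i)" "weakly_prefers \<sigma> i (last (\<sigma> i)) c"
  shows "c = last (\<sigma> i)"
  using assms distinct_nth_before_neq_last unfolding weakly_prefers_def by metis

lemma dom_graph_edge_from_vetoer:
  assumes "election V C \<sigma>" "(i, j) \<in> dom_graph V \<sigma> a" "last (\<sigma> i) = a"
  shows "top \<sigma> j = a"
proof -
  have "i \<in> V" "weakly_prefers \<sigma> i a (top \<sigma> j)"
    using assms(2) unfolding dom_graph_def by auto
  moreover from \<open>i \<in> V\<close> have "distinct (\<sigma> i)"
    using assms(1) unfolding election_def by blast
  ultimately show ?thesis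
    using weakly_prefers_last_imp_eq assms(3) by metis
qed

theorem lemma6:
  fixes V :: "'v set" and C :: "'c set" and \<sigma> :: "'v \<Rightarrow> 'c list" and a :: 'c
  assumes "election V C \<sigma>"
    and "a \<in> C"
    and "has_perfect_matching V (dom_graph V \<sigma> a)"
  shows "plu V \<sigma> a \<ge> veto V \<sigma> a"
proof -
  obtain \<pi> where bij: "bij_betw \<pi> V V" and edge: "\<forall>i\<in>V. (i, \<pi> i) \<in> dom_graph V \<sigma> a"
    using assms(3) unfolding has_perfect_matching_def by blast
  let ?vetoers = "{i\<in>V. last (\<sigma> i) = a}" and ?tops = "{i\<in>V. top \<sigma> i = a}"
  have "inj_on \<pi> ?vetoers"
    using bij_betw_imp_inj_on[OF bij] by (rule inj_on_subset) auto
  moreover have "\<pi> ` ?vetoers \<subseteq> ?tops"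
    using edge dom_graph_edge_from_vetoer[OF assms(1)] bij_betw_apply[OF bij] by auto
  moreover have "finite ?tops"
    using assms(1) unfolding election_def by simp
  ultimately have "card ?vetoers \<le> card ?tops"
    by (rule card_inj_on_le)
  then show ?thesis unfolding plu_def veto_def .
qed

end
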